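(* For $a\in\{1,\dots,n\}$ let $z_a = q\omega_a - (q-1)\psi_a\psi_a^*\omega_a^{k+1}\in\mathrm{Cl}_q(n,k)$. Then each $z_a$ is central in $\mathrm{Cl}_q(n,k)$, and for every positive integer $r$, \[ z_a^r = q^r\omega_a^r - (q^r-1)\psi_a\psi_a^*\omega_a^{k+r}. \] In particular $z_a^k=\psi_a\psi_a^*+\psi_a^*\psi_a$, so $z_a^{2k}=1$.
   Context: Let $\mathbb{k}$ be a field of characteristic different from $2$, let $q\in\mathbb{k}^\times$, and let $n,k$ be positive integers. The quantum Clifford algebra $\mathrm{Cl}_q(n,k)$ is the unital associative $\mathbb{k}$-algebra generated by $\psi_a,\psi_a^*,\omega_a,\omega_a^{-1}$ for $a\in\{1,\dots,n\}$, subject to the relations (for all $a,b\in\{1,\dots,n\}$): $\omega_a\omega_b=\omega_b\omega_a$; $\omega_a\omega_a^{-1}=1$; $\omega_a\psi_b=q^{\delta_{ab}}\psi_b\omega_a$; $\omega_a\psi_b^*=q^{-\delta_{ab}}\psi_b^*\omega_a$; $\psi_a\psi_b+\psi_b\psi_a=0$; $\psi_a^*\psi_b^*+\psi_b^*\psi_a^*=0$; $\psi_a\psi_a^*+q^k\psi_a^*\psi_a=\omega_a^{-k}$; $\psi_a\psi_a^*+q^{-k}\psi_a^*\psi_a=\omega_a^{k}$; and $\psi_a\psi_b^*+\psi_b^*\psi_a=0$ if $a\neq b$. *)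

theory Defs
  imports Main
begin

text \<open>A unital associative k-algebra is modelled as a ring A (type 'a) together with a
unital ring homomorphism iota from the field k into the centre of A.
The data (iota, psi, psis, om, omi) satisfy the defining relations of Cl_q(n,k);
psis a stands for psi_a^*, om a for omega_a and omi a for omega_a^{-1}.\<close>

definition is_k_algebra_map :: "('k::field \<Rightarrow> 'a::ring_1) \<Rightarrow> bool" where
  "is_k_algebra_map \<iota> \<longleftrightarrow>
     \<iota> 1 = 1 \<and> (\<forall>c d. \<iota> (c + d) = \<iota> c + \<iota> d) \<and> (\<forall>c d. \<iota> (c * d) = \<iota> c * \<iota> d) \<and>
     (\<forall>c x. \<iota> c * x = x * \<iota> c)"

definition Cl_relations ::
  "('k::field \<Rightarrow> 'a::ring_1) \<Rightarrow> 'k \<Rightarrow> nat \<Rightarrow> nat \<Rightarrow>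
   (nat \<Rightarrow> 'a) \<Rightarrow> (nat \<Rightarrow> 'a) \<Rightarrow> (nat \<Rightarrow> 'a) \<Rightarrow> (nat \<Rightarrow> 'a) \<Rightarrow> bool" where
  "Cl_relations \<iota> q n k psi psis om omi \<longleftrightarrow>
    (\<forall>a\<in>{1..n}. \<forall>b\<in>{1..n}.
       om a * om b = om b * om a \<and>
       om a * omi a = 1 \<and> omi a * om a = 1 \<and>
       om a * psi b = \<iota> (if a = b then q else 1) * psi b * om a \<and>
       om a * psis b = \<iota> (if a = b then inverse q else 1) * psis b * om a \<and>
       psi a * psi b + psi b * psi a = 0 \<and>
       psis a * psis b + psis b * psis a = 0 \<and>
       psi a * psis a + \<iota> (q ^ k) * psis a * psi a = omi a ^ k \<and>
       psi a * psis a + \<iota> (inverse q ^ k) * psis a * psi a = om a ^ k \<and>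
       (a \<noteq> b \<longrightarrow> psi a * psis b + psis b * psi a = 0))"

text \<open>The subalgebra generated by the scalars and the generators (the image of Cl_q(n,k)).\<close>
inductive_set Cl_gen ::
  "('k \<Rightarrow> 'a::ring_1) \<Rightarrow> nat \<Rightarrow> (nat \<Rightarrow> 'a) \<Rightarrow> (nat \<Rightarrow> 'a) \<Rightarrow> (nat \<Rightarrow> 'a) \<Rightarrow> (nat \<Rightarrow> 'a) \<Rightarrow> 'a set"
  for \<iota> n psi psis om omi where
  scal: "\<iota> c \<in> Cl_gen \<iota> n psi psis om omi"
| gpsi: "a \<in> {1..n} \<Longrightarrow> psi a \<in> Cl_gen \<iota> n psi psis om omi"
| gpsis: "a \<in> {1..n} \<Longrightarrow> psis a \<in> Cl_gen \<iota> n psi psis om omi"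
| gom: "a \<in> {1..n} \<Longrightarrow> om a \<in> Cl_gen \<iota> n psi psis om omi"
| gomi: "a \<in> {1..n} \<Longrightarrow> omi a \<in> Cl_gen \<iota> n psi psis om omi"
| add: "x \<in> Cl_gen \<iota> n psi psis om omi \<Longrightarrow> y \<in> Cl_gen \<iota> n psi psis om omi \<Longrightarrow> x + y \<in> Cl_gen \<iota> n psi psis om omi"
| mult: "x \<in> Cl_gen \<iota> n psi psis om omi \<Longrightarrow> y \<in> Cl_gen \<iota> n psi psis om omi \<Longrightarrow> x * y \<in> Cl_gen \<iota> n psi psis om omi"

end

theory Submission
  imports Defs
begin

(* Fix the index a and write w, p, s for omega_a, psi_a, psi_a^*.  The relations give
   p s p s = p s w^-k = p s w^k, so E = p s w^k is an idempotent commuting with w, and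
   z_a = w (q (1 - E) + E).  Hence z_a^r = w^r (q^r (1 - E) + E), which is the power formula.
   Since E p = p, p E = 0, E s = 0 and s E = s, the element z_a commutes with p and s;
   generators of index b ~= a commute with w and with p s, hence with z_a.  For r = k the
   power formula collapses to z_a^k = p s + s p, whose square is
   (p s + q^-k s p) (p s + q^k s p) = w^k w^-k = 1. *)

lemma power_mult_commuting:
  fixes a b :: "'a::monoid_mult"
  assumes "a * b = b * a"
  shows "(a * b) ^ n = a ^ n * b ^ n"
proof (induction n)
  case (Suc n)
  have "b ^ n * a = a * b ^ n"
    using power_commuting_commutes[of b a n] assms by simp
  then have "a ^ n * b ^ n * (a * b) = a ^ n * a * (b ^ n * b)"
    by (metis mult.assoc)
  with Suc show ?case by (simp only: power_Suc2)
qed simp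

lemma power_skew_commute:
  fixes a b e :: "'a::monoid_mult"
  assumes "a * b = e * b * a" and "\<And>x. e * x = x * e"
  shows "a ^ n * b = e ^ n * b * a ^ n"
proof (induction n)
  case (Suc n)
  have "e ^ n * a = a * e ^ n"
    using power_commuting_commutes[of e a n] assms(2) by simp
  have "a ^ Suc n * b = a * e ^ n * b * a ^ n"
    using Suc by (simp add: mult.assoc)
  also have "\<dots> = e ^ n * (a * b) * a ^ n"
    using \<open>e ^ n * a = a * e ^ n\<close> by (metis mult.assoc)
  also have "\<dots> = e ^ Suc n * b * a ^ Suc n"
    by (simp only: assms(1) power_Suc2[of e] power_Suc[of a] mult.assoc)
  finally show ?case .
qed simp

lemma power_idempotent_combination:
  fixes x y E :: "'a::ring_1"
  assumes "E * E = E" and "\<And>u. x * u = u * x" and "\<And>u. y * u = u * y"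
  shows "(x * (1 - E) + y * E) ^ n = x ^ n * (1 - E) + y ^ n * E"
proof (induction n)
  case (Suc n)
  let ?G = "x * (1 - E) + y * E"
  have GF: "?G * (1 - E) = x * (1 - E)" and GE: "?G * E = y * E"
    using assms(1) by (simp_all add: algebra_simps)
  have "?G * x ^ n = x ^ n * ?G" and "?G * y ^ n = y ^ n * ?G"
    using power_commuting_commutes assms(2,3) by metis+
  then have "?G ^ Suc n = x ^ n * (?G * (1 - E)) + y ^ n * (?G * E)"
    using Suc by (simp only: power_Suc distrib_left flip: mult.assoc)
  also have "\<dots> = x ^ Suc n * (1 - E) + y ^ Suc n * E"
    by (simp add: GF GE power_commutes flip: mult.assoc)
  finally show ?case .
qed simp

lemma commute_inverse:
  fixes y u u' :: "'a::monoid_mult"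
  assumes "y * u = u * y" and "u * u' = 1" and "u' * u = 1"
  shows "y * u' = u' * y"
proof -
  have "y * u' = u' * u * y * u'" by (simp add: assms(3))
  also have "\<dots> = u' * y * (u * u')" by (metis assms(1) mult.assoc)
  finally show ?thesis by (simp add: assms(2))
qed

lemma commute_mult_if_anticommute:
  fixes x y y' :: "'a::ring_1"
  assumes "x * y = - (y * x)" and "x * y' = - (y' * x)"
  shows "x * (y * y') = y * y' * x"
proof -
  have "x * (y * y') = - (y * (x * y'))" by (simp add: assms(1) flip: mult.assoc)
  also have "\<dots> = y * y' * x" by (simp add: assms(2) mult.assoc)
  finally show ?thesis .
qed

(* One mode of Cl_q(n,k): c and d stand for the central scalars q and q^-1, w and v for
   omega_a and omega_a^-1, p and s for psi_a and psi_a^*. *)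

locale clifford_mode =
  fixes c d w v p s z :: "'a::ring_1" and k :: nat
  assumes c_central: "\<And>x. c * x = x * c" and d_central: "\<And>x. d * x = x * d"
    and c_d: "c * d = 1" and w_v: "w * v = 1" and v_w: "v * w = 1"
    and w_p: "w * p = c * p * w" and w_s: "w * s = d * s * w"
    and p_p: "p * p = 0" and s_s: "s * s = 0"
    and p_s_v: "p * s + c ^ k * s * p = v ^ k" and p_s_w: "p * s + d ^ k * s * p = w ^ k"
    and z_eq: "z = c * w - (c - 1) * p * s * w ^ (k + 1)"
begin

lemma c_pow_central: "c ^ m * x = x * c ^ m"
  using power_commuting_commutes c_central by metis

lemma d_pow_central: "d ^ m * x = x * d ^ m"
  using power_commuting_commutes d_central by metis

lemma d_c: "d * c = 1"
  using c_d c_central by metis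

lemma p_p_left: "p * (p * x) = 0"
  by (simp add: p_p flip: mult.assoc)

lemma s_s_left: "s * (s * x) = 0"
  by (simp add: s_s flip: mult.assoc)

lemma w_pow_p: "w ^ m * p = c ^ m * p * w ^ m"
  using power_skew_commute w_p c_central .

lemma w_pow_s: "w ^ m * s = d ^ m * s * w ^ m"
  using power_skew_commute w_s d_central .

lemma p_w: "p * w = d * w * p"
proof -
  have "d * w * p = d * c * p * w" by (simp add: w_p mult.assoc)
  then show ?thesis by (simp add: d_c)
qed

lemma s_w: "s * w = c * w * s"
proof -
  have "c * w * s = c * d * s * w" by (simp add: w_s mult.assoc)
  then show ?thesis by (simp add: c_d)
qed

lemma w_pow_ps: "w ^ m * (p * s) = p * s * w ^ m"
proof -
  have "w * (p * s) = c * p * (d * s * w)" by (simp add: w_p flip: w_s mult.assoc)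
  also have "\<dots> = c * d * p * s * w" by (simp add: d_central mult.assoc)
  finally show ?thesis using power_commuting_commutes c_d by (metis mult_1_left)
qed

lemma ps_ps: "p * s * (p * s) = p * s * v ^ k"
proof -
  have "p * s * (c ^ k * s * p) = c ^ k * p * (s * s) * p" by (simp add: c_pow_central mult.assoc)
  then show ?thesis by (simp add: s_s distrib_left flip: p_s_v)
qed

lemma ps_w_pow_k: "p * s * w ^ k = p * s * v ^ k"
proof -
  have "p * s * (d ^ k * s * p) = d ^ k * p * (s * s) * p" by (simp add: d_pow_central mult.assoc)
  then show ?thesis by (simp add: s_s distrib_left ps_ps flip: p_s_w)
qed

lemma psp_v: "p * s * p = v ^ k * p"
  by (simp add: distrib_right mult.assoc p_p flip: p_s_v)

lemma psp_w: "p * s * p = w ^ k * p"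
  by (simp add: distrib_right mult.assoc p_p flip: p_s_w)

lemma s_ps: "s * (p * s) = s * v ^ k"
proof -
  have "s * (c ^ k * s * p) = c ^ k * (s * s) * p" by (simp add: c_pow_central mult.assoc)
  then show ?thesis by (simp add: s_s distrib_left flip: p_s_v)
qed

definition E where "E = p * s * w ^ k"

lemma w_E: "w * E = E * w"
proof -
  have "w * E = w * (p * s) * w ^ k" by (simp add: E_def mult.assoc)
  also have "\<dots> = p * s * (w * w ^ k)" using w_pow_ps[of 1] by (simp add: mult.assoc)
  finally show ?thesis by (simp add: E_def mult.assoc power_commutes)
qed

lemma E_idem: "E * E = E"
proof -
  have "E * E = p * s * (w ^ k * (p * s)) * w ^ k" by (simp add: E_def mult.assoc)
  also have "\<dots> = p * s * (p * s) * w ^ k * w ^ k" by (simp add: w_pow_ps mult.assoc)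
  also have "\<dots> = p * s * v ^ k * w ^ k * w ^ k" by (simp only: ps_ps)
  also have "\<dots> = p * s * (v ^ k * w ^ k) * w ^ k" by (simp only: mult.assoc)
  finally show ?thesis by (simp add: left_right_inverse_power v_w E_def)
qed

lemma p_E: "p * E = 0"
  by (simp add: E_def p_p flip: mult.assoc)

lemma E_p: "E * p = p"
proof -
  have "E * p = p * s * (c ^ k * p * w ^ k)" by (simp add: E_def w_pow_p mult.assoc)
  also have "\<dots> = c ^ k * (p * s * p) * w ^ k" by (metis c_pow_central mult.assoc)
  also have "\<dots> = c ^ k * (w ^ k * p) * w ^ k" by (simp only: psp_w)
  also have "\<dots> = w ^ k * (c ^ k * p * w ^ k)" by (metis c_pow_central mult.assoc)
  also have "\<dots> = w ^ k * (v ^ k * p)" by (simp only: psp_v flip: w_pow_p psp_w)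
  finally show ?thesis by (simp add: left_right_inverse_power w_v flip: mult.assoc)
qed

lemma E_s: "E * s = 0"
proof -
  have "E * s = p * s * (d ^ k * s * w ^ k)" by (simp add: E_def w_pow_s mult.assoc)
  also have "\<dots> = d ^ k * p * (s * s) * w ^ k" by (metis d_pow_central mult.assoc)
  finally show ?thesis by (simp add: s_s)
qed

lemma s_E: "s * E = s"
proof -
  have "s * E = s * (p * s) * w ^ k" by (simp add: E_def mult.assoc)
  also have "\<dots> = s * (v ^ k * w ^ k)" by (simp add: s_ps mult.assoc)
  finally show ?thesis by (simp add: left_right_inverse_power v_w)
qed

definition G where "G = c * (1 - E) + E"

lemma z_eq_w_G: "z = w * G"
proof -
  have "w * E = E * w" by (rule w_E)
  also have "\<dots> = p * s * w ^ (k + 1)" by (simp add: E_def mult.assoc power_commutes)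
  finally have "z = c * w - (c - 1) * (w * E)" by (simp add: z_eq mult.assoc)
  also have "\<dots> = c * w * (1 - E) + w * E" by (simp add: algebra_simps)
  also have "\<dots> = w * G"
    by (simp add: G_def distrib_left c_central[of w, symmetric] flip: mult.assoc)
  finally show ?thesis .
qed

lemma w_G: "w * G = G * w"
proof -
  have "w * (1 - E) = (1 - E) * w" by (simp add: algebra_simps w_E)
  then show ?thesis
    by (simp add: G_def distrib_left distrib_right w_E) (metis c_central mult.assoc)
qed

lemma G_p: "G * p = p"
  by (simp add: G_def algebra_simps E_p)

lemma p_G: "p * G = c * p"
proof -
  have "p * G = c * (p * (1 - E)) + p * E" by (metis G_def distrib_left mult.assoc c_central)
  then show ?thesis by (simp add: p_E right_diff_distrib)
qed

lemma G_s: "G * s = c * s"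
  by (simp add: G_def algebra_simps E_s)

lemma s_G: "s * G = s"
proof -
  have "s * G = c * (s * (1 - E)) + s * E" by (metis G_def distrib_left mult.assoc c_central)
  then show ?thesis by (simp add: s_E right_diff_distrib)
qed

lemma power_G: "G ^ r = c ^ r * (1 - E) + E"
  using power_idempotent_combination[where x = c and y = 1, OF E_idem c_central]
  by (simp add: G_def)

lemma z_power: "z ^ r = c ^ r * w ^ r - (c ^ r - 1) * p * s * w ^ (k + r)"
proof -
  have "z ^ r = w ^ r * (c ^ r * (1 - E) + E)"
    using power_mult_commuting[OF w_G] by (simp add: z_eq_w_G power_G)
  also have "\<dots> = c ^ r * w ^ r - (c ^ r - 1) * (w ^ r * E)"
    by (simp add: algebra_simps) (metis c_pow_central mult.assoc)
  also have "w ^ r * E = w ^ r * (p * s) * w ^ k" by (simp add: E_def mult.assoc)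
  also have "\<dots> = p * s * w ^ (r + k)" by (simp add: w_pow_ps power_add mult.assoc)
  finally show ?thesis by (simp add: mult.assoc add.commute)
qed

lemma z_power_k: "z ^ k = p * s + s * p"
proof -
  have "p * s * w ^ (k + k) = p * s * (v ^ k * w ^ k)"
    by (simp add: power_add ps_w_pow_k flip: mult.assoc)
  then have ps: "p * s * w ^ (k + k) = p * s"
    by (simp add: left_right_inverse_power v_w)
  have "c ^ k * w ^ k = c ^ k * (p * s) + c ^ k * d ^ k * s * p"
    by (simp add: distrib_left mult.assoc flip: p_s_w)
  then have "c ^ k * w ^ k = c ^ k * (p * s) + s * p"
    by (simp add: left_right_inverse_power c_d)
  with ps show ?thesis
    by (simp add: z_power mult.assoc algebra_simps)
qed

lemma z_power_2k: "z ^ (2 * k) = 1"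
proof -
  have "z ^ (2 * k) = (p * s + s * p) * (p * s + s * p)"
    by (simp add: power_mult z_power_k power2_eq_square mult.commute[of 2])
  also have "\<dots> = (p * s + d ^ k * s * p) * (p * s + c ^ k * s * p)"
  proof -
    have "p * s * (c ^ k * s * p) = c ^ k * (p * s * (s * p))"
      and "d ^ k * s * p * (c ^ k * s * p) = d ^ k * c ^ k * (s * p * (s * p))"
      by (metis c_pow_central mult.assoc)+
    moreover have "d ^ k * c ^ k = 1"
      using left_right_inverse_power d_c .
    ultimately show ?thesis
      by (simp add: distrib_left distrib_right p_p_left s_s_left mult.assoc)
  qed
  also have "\<dots> = 1"
    by (simp add: p_s_v p_s_w left_right_inverse_power w_v)
  finally show ?thesis .
qed

lemma z_commute_w: "z * w = w * z"
  by (simp add: z_eq_w_G mult.assoc flip: w_G)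

lemma z_commute_p: "z * p = p * z"
proof -
  have "p * z = d * w * (p * G)" by (simp add: z_eq_w_G p_w flip: mult.assoc)
  also have "\<dots> = d * c * (w * p)" by (simp add: p_G) (metis c_central mult.assoc)
  finally show ?thesis by (simp add: d_c z_eq_w_G G_p mult.assoc)
qed

lemma z_commute_s: "z * s = s * z"
proof -
  have "s * z = c * w * (s * G)" by (simp add: z_eq_w_G s_w flip: mult.assoc)
  then show ?thesis by (simp add: s_G z_eq_w_G G_s mult.assoc) (metis c_central mult.assoc)
qed

lemma commute_z_if_commute_w_ps:
  assumes "x * w = w * x" and "x * (p * s) = p * s * x"
  shows "x * z = z * x"
proof -
  have "x * w ^ k = w ^ k * x"
    using power_commuting_commutes assms(1) by metis
  have "x * E = x * (p * s) * w ^ k" by (simp add: E_def mult.assoc)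
  also have "\<dots> = p * s * (w ^ k * x)"
    by (simp add: assms(2) mult.assoc \<open>x * w ^ k = w ^ k * x\<close>)
  finally have xE: "x * E = E * x" by (simp add: E_def mult.assoc)
  have "x * (c * y) = c * (x * y)" for y
    by (metis c_central mult.assoc)
  with xE have "x * G = G * x"
    by (simp add: G_def algebra_simps c_central[of x])
  with assms(1) show ?thesis
    by (metis z_eq_w_G mult.assoc)
qed

end

locale k_algebra_map =
  fixes \<iota> :: "'k::field \<Rightarrow> 'a::ring_1"
  assumes is_k_algebra_map: "is_k_algebra_map \<iota>"
begin

lemma map_one: "\<iota> 1 = 1" and map_add: "\<iota> (x + y) = \<iota> x + \<iota> y"
  and map_mult: "\<iota> (x * y) = \<iota> x * \<iota> y" and central: "\<iota> x * u = u * \<iota> x"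
  using is_k_algebra_map unfolding is_k_algebra_map_def by blast+

lemma map_diff: "\<iota> (x - y) = \<iota> x - \<iota> y"
  using map_add[of "x - y" y] by (simp add: algebra_simps)

lemma map_power: "\<iota> (x ^ m) = \<iota> x ^ m"
  by (induction m) (simp_all add: map_one map_mult)

lemma double_eq_0_imp_eq_0:
  fixes u :: 'a
  assumes "(2::'k) \<noteq> 0" and "u + u = 0"
  shows "u = 0"
proof -
  have "\<iota> 2 * u = (\<iota> 1 + \<iota> 1) * u"
    using map_add[of 1 1] by (simp only: one_add_one)
  also have "\<dots> = 0"
    using assms(2) by (simp only: map_one distrib_right mult_1_left)
  finally have two_u: "\<iota> 2 * u = 0" .
  have "u = \<iota> (inverse 2 * 2) * u"
    using assms(1) by (simp add: map_one)
  also have "\<dots> = \<iota> (inverse 2) * (\<iota> 2 * u)"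
    by (simp only: map_mult mult.assoc)
  finally show ?thesis by (simp add: two_u)
qed

end

lemma Cl_relations_clifford_mode:
  fixes \<iota> :: "'k::field \<Rightarrow> 'a::ring_1"
  assumes "is_k_algebra_map \<iota>" and "(2::'k) \<noteq> 0" and "q \<noteq> 0"
    and "Cl_relations \<iota> q n k psi psis om omi" and "a \<in> {1..n}"
  shows "clifford_mode (\<iota> q) (\<iota> (inverse q)) (om a) (omi a) (psi a) (psis a)
    (\<iota> q * om a - \<iota> (q - 1) * psi a * psis a * om a ^ (k + 1)) k"
proof -
  interpret \<iota>: k_algebra_map \<iota> by (rule k_algebra_map.intro) fact
  have R: "om a * omi a = 1" "omi a * om a = 1"
    "om a * psi a = \<iota> q * psi a * om a" "om a * psis a = \<iota> (inverse q) * psis a * om a"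
    "psi a * psi a + psi a * psi a = 0" "psis a * psis a + psis a * psis a = 0"
    "psi a * psis a + \<iota> q ^ k * psis a * psi a = omi a ^ k"
    "psi a * psis a + \<iota> (inverse q) ^ k * psis a * psi a = om a ^ k"
    using assms(4,5) unfolding Cl_relations_def by (simp_all add: \<iota>.map_power)
  show ?thesis
  proof
    show "\<iota> q * \<iota> (inverse q) = 1"
      using assms(3) by (simp add: \<iota>.map_one flip: \<iota>.map_mult)
    show "psi a * psi a = 0" "psis a * psis a = 0"
      using \<iota>.double_eq_0_imp_eq_0[OF assms(2)] R(5,6) by blast+
  qed (use R in \<open>simp_all add: \<iota>.central \<iota>.map_diff \<iota>.map_one\<close>)
qed

lemma Cl_relations_other_mode_commute:
  fixes \<iota> :: "'k::field \<Rightarrow> 'a::ring_1"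
  assumes "is_k_algebra_map \<iota>" and "Cl_relations \<iota> q n k psi psis om omi"
    and "a \<in> {1..n}" and "b \<in> {1..n}" and "a \<noteq> b" and "x \<in> {psi b, psis b, om b}"
  shows "x * om a = om a * x" and "x * (psi a * psis a) = psi a * psis a * x"
proof -
  interpret \<iota>: k_algebra_map \<iota> by (rule k_algebra_map.intro) fact
  have ab: "om a * om b = om b * om a"
    "om a * psi b = psi b * om a" "om a * psis b = psis b * om a"
    "om b * psi a = psi a * om b" "om b * psis a = psis a * om b"
    "psi b * psi a = - (psi a * psi b)" "psis b * psis a = - (psis a * psis b)"
    "psi b * psis a = - (psis a * psi b)" "psis b * psi a = - (psi a * psis b)"
    using assms(2-5) unfolding Cl_relations_def
    by (auto simp: \<iota>.map_one eq_neg_iff_add_eq_0 add.commute)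
  show "x * om a = om a * x"
    using assms(6) ab by auto
  have "om b * (psi a * psis a) = psi a * psis a * om b"
    using ab(4,5) by (metis mult.assoc)
  moreover have "psi b * (psi a * psis a) = psi a * psis a * psi b"
    using ab(6,8) by (rule commute_mult_if_anticommute)
  moreover have "psis b * (psi a * psis a) = psi a * psis a * psis b"
    using ab(9,7) by (rule commute_mult_if_anticommute)
  ultimately show "x * (psi a * psis a) = psi a * psis a * x"
    using assms(6) by auto
qed

lemma Cl_gen_commute:
  fixes \<iota> :: "'k::field \<Rightarrow> 'a::ring_1"
  assumes "is_k_algebra_map \<iota>" and "Cl_relations \<iota> q n k psi psis om omi"
    and gens: "\<And>b x. b \<in> {1..n} \<Longrightarrow> x \<in> {psi b, psis b, om b} \<Longrightarrow> y * x = x * y"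
    and "x \<in> Cl_gen \<iota> n psi psis om omi"
  shows "y * x = x * y"
  using assms(4)
proof (induction rule: Cl_gen.induct)
  case (scal c)
  then show ?case
    using k_algebra_map.central[OF k_algebra_map.intro, OF assms(1)] by metis
next
  case (gomi b)
  then have "om b * omi b = 1" and "omi b * om b = 1"
    using assms(2) unfolding Cl_relations_def by auto
  with gomi show ?case
    using commute_inverse gens by blast
next
  case (add x x')
  then show ?case by (simp add: distrib_left distrib_right)
next
  case (mult x x')
  then show ?case by (metis mult.assoc)
qed (use gens in auto)

theorem lemma3p13:
  fixes \<iota> :: "'k::field \<Rightarrow> 'a::ring_1" and q :: 'k and n k :: nat
    and psi psis om omi :: "nat \<Rightarrow> 'a" and z :: "nat \<Rightarrow> 'a"
  assumes "(2::'k) \<noteq> 0" and "q \<noteq> 0" and "n \<ge> 1" and "k \<ge> 1"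
    and "is_k_algebra_map \<iota>"
    and "Cl_relations \<iota> q n k psi psis om omi"
    and "\<And>a. z a = \<iota> q * om a - \<iota> (q - 1) * psi a * psis a * om a ^ (k + 1)"
    and "a \<in> {1..n}"
  shows "(\<forall>x\<in>Cl_gen \<iota> n psi psis om omi. z a * x = x * z a)
    \<and> (\<forall>r::nat. r \<ge> 1 \<longrightarrow>
         z a ^ r = \<iota> (q ^ r) * om a ^ r - \<iota> (q ^ r - 1) * psi a * psis a * om a ^ (k + r))
    \<and> z a ^ k = psi a * psis a + psis a * psi a
    \<and> z a ^ (2 * k) = 1"
proof -
  interpret \<iota>: k_algebra_map \<iota> by (rule k_algebra_map.intro) fact
  interpret M: clifford_mode "\<iota> q" "\<iota> (inverse q)" "om a" "omi a" "psi a" "psis a" "z a" k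
    unfolding assms(7)[of a] by (rule Cl_relations_clifford_mode[OF assms(5,1,2,6,8)])
  have "z a * x = x * z a" if "b \<in> {1..n}" and "x \<in> {psi b, psis b, om b}" for b x
  proof (cases "b = a")
    case True
    with that(2) show ?thesis using M.z_commute_p M.z_commute_s M.z_commute_w by auto
  next
    case False
    with that show ?thesis
      using M.commute_z_if_commute_w_ps Cl_relations_other_mode_commute[OF assms(5,6,8)] by metis
  qed
  then have "\<forall>x\<in>Cl_gen \<iota> n psi psis om omi. z a * x = x * z a"
    using Cl_gen_commute[OF assms(5,6)] by blast
  moreover have "z a ^ r = \<iota> (q ^ r) * om a ^ r - \<iota> (q ^ r - 1) * psi a * psis a * om a ^ (k + r)"
    for r
    using M.z_power[of r] by (simp add: \<iota>.map_power \<iota>.map_diff \<iota>.map_one)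
  ultimately show ?thesis
    using M.z_power_k M.z_power_2k by blast
qed

end
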